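(* Let $n$ be a positive integer, let $s_1,s_2,s_3>0$, and let $z\in\mathbb{R}$ (in the application $z=x_1-2x_2+x_3$ for observed cell means $x_1,x_2,x_3$). For $\rho=(\rho_1,\rho_2,\rho_3)$ put $$s^2(\rho_1,\rho_2,\rho_3)=s_1^2+4s_2^2+s_3^2-4s_1s_2\rho_3+2s_1s_3\rho_2-4s_2s_3\rho_1,$$ $s(\rho_1,\rho_2,\rho_3)=\sqrt{s^2(\rho_1,\rho_2,\rho_3)}$, and $$f_n(z;\rho_1,\rho_2,\rho_3)=\sqrt{\frac{n}{2\pi}}\,\frac{1}{s(\rho_1,\rho_2,\rho_3)}\exp\Big(-\frac{nz^2}{2s^2(\rho_1,\rho_2,\rho_3)}\Big).$$ Let $$R=\big\{(\rho_1,\rho_2,\rho_3): -1<\rho_i<1\ (i=1,2,3),\ 1-\rho_1^2-\rho_2^2-\rho_3^2+2\rho_1\rho_2\rho_3>0,\ s(\rho_1,\rho_2,\rho_3)\le s(0,0,0)\big\},$$ and define the evidential value $$\mathbb V=\frac{\sup_{(\rho_1,\rho_2,\rho_3)\in R} f_n(z;\rho_1,\rho_2,\rho_3)}{f_n(z;0,0,0)}.$$ Define $s_L^2=\inf_{(\rho_1,\rho_2,\rho_3)\in R}s^2(\rho_1,\rho_2,\rho_3)$, $\tilde s_L^2=\min\{(2s_2-(s_1+s_3))^2,\ (2s_2-\sqrt{s_1^2+s_3^2})^2\}$ with $\tilde s_L\ge 0$, and $s_0^2=s^2(0,0,0)=s_1^2+4s_2^2+s_3^2$ with $s_0>0$.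 Then $s_L^2\le \tilde s_L^2\le s_0^2$. Moreover: (i) if $\tilde s_L^2\le nz^2\le s_0^2$, then $$\mathbb V=\frac{s_0}{\sqrt{nz^2}}\exp\Big\{-\frac12 nz^2\Big[\frac1{nz^2}-\frac1{s_0^2}\Big]\Big\}\ge 1;$$ (ii) if $nz^2\le \tilde s_L^2$, then $$\mathbb V\ge \frac{s_0}{\tilde s_L}\exp\Big\{-\frac12 nz^2\Big[\frac1{\tilde s_L^2}-\frac1{s_0^2}\Big]\Big\}\ge 1,$$ and $\mathbb V$ is at most $\frac{s_0}{\sqrt{nz^2}}\exp\{-\frac12 nz^2[\frac1{nz^2}-\frac1{s_0^2}]\}$; (iii) if $s_0^2\le nz^2$, then $\mathbb V=1$.
   Context: Statistical setting (for motivation): $\sqrt n\,(X_1-2X_2+X_3)$ is modeled as normal with mean $0$ and variance $\sigma_1^2+4\sigma_2^2+\sigma_3^2-4\sigma_1\sigma_2\rho_3+2\sigma_1\sigma_3\rho_2-4\sigma_2\sigma_3\rho_1$, where $X_i$ are three cell means of $n$ observations each, $\sigma_i^2$ the cell variances and $\rho_1,\rho_2,\rho_3$ correlations between cell means; $f_n$ is this normal density of $Z=X_1-2X_2+X_3$ evaluated at $z$ with $\sigma_i$ replaced by the sample standard deviations $s_i$. The set $R$ is the set of admissible correlation parameters under the "fabrication" hypothesis, and $(0,0,0)$ corresponds to the independence hypothesis. *)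

theory Defs
  imports "HOL-Analysis.Analysis"
begin

definition sig2 :: "real \<Rightarrow> real \<Rightarrow> real \<Rightarrow> real \<times> real \<times> real \<Rightarrow> real" where
  "sig2 s1 s2 s3 = (\<lambda>(r1, r2, r3).
     s1^2 + 4* s2^2 + s3^2 - 4* s1* s2*r3 + 2* s1* s3*r2 - 4* s2* s3*r1)"

definition sig :: "real \<Rightarrow> real \<Rightarrow> real \<Rightarrow> real \<times> real \<times> real \<Rightarrow> real" where
  "sig s1 s2 s3 r = sqrt (sig2 s1 s2 s3 r)"

definition fdens :: "nat \<Rightarrow> real \<Rightarrow> real \<Rightarrow> real \<Rightarrow> real \<Rightarrow> real \<times> real \<times> real \<Rightarrow> real" where
  "fdens n s1 s2 s3 z r =
     sqrt (real n / (2*pi)) * (1 / sig s1 s2 s3 r) * exp (- (real n * z^2) / (2 * sig2 s1 s2 s3 r))"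

definition Rset :: "real \<Rightarrow> real \<Rightarrow> real \<Rightarrow> (real \<times> real \<times> real) set" where
  "Rset s1 s2 s3 = {(r1, r2, r3).
     -1 < r1 \<and> r1 < 1 \<and> -1 < r2 \<and> r2 < 1 \<and> -1 < r3 \<and> r3 < 1 \<and>
     1 - r1^2 - r2^2 - r3^2 + 2*r1*r2*r3 > 0 \<and>
     sig s1 s2 s3 (r1, r2, r3) \<le> sig s1 s2 s3 (0, 0, 0)}"

text \<open>Evidential value, as an extended real (the supremum may be infinite).\<close>
definition evV :: "nat \<Rightarrow> real \<Rightarrow> real \<Rightarrow> real \<Rightarrow> real \<Rightarrow> ereal" where
  "evV n s1 s2 s3 z =
     (SUP r\<in>Rset s1 s2 s3. ereal (fdens n s1 s2 s3 z r)) / ereal (fdens n s1 s2 s3 z (0, 0, 0))"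

definition sL2 :: "real \<Rightarrow> real \<Rightarrow> real \<Rightarrow> real" where
  "sL2 s1 s2 s3 = Inf (sig2 s1 s2 s3 ` Rset s1 s2 s3)"

definition tsL2 :: "real \<Rightarrow> real \<Rightarrow> real \<Rightarrow> real" where
  "tsL2 s1 s2 s3 = min ((2* s2 - (s1 + s3))^2) ((2* s2 - sqrt (s1^2 + s3^2))^2)"

definition tsL :: "real \<Rightarrow> real \<Rightarrow> real \<Rightarrow> real" where
  "tsL s1 s2 s3 = sqrt (tsL2 s1 s2 s3)"

definition s0 :: "real \<Rightarrow> real \<Rightarrow> real \<Rightarrow> real" where
  "s0 s1 s2 s3 = sqrt (s1^2 + 4* s2^2 + s3^2)"

text \<open>Upper bound of (i)/(ii); its value at n z^2 = 0 is the limit +infinity.\<close>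
definition Bup :: "nat \<Rightarrow> real \<Rightarrow> real \<Rightarrow> real \<Rightarrow> real \<Rightarrow> ereal" where
  "Bup n s1 s2 s3 z =
     (let a = real n * z^2; S = s0 s1 s2 s3 in
      if a > 0 then ereal (S / sqrt a * exp (- 1/2 * a * (1/a - 1/S^2))) else \<infinity>)"

text \<open>Lower bound of (ii); its value at tilde s_L = 0 is the limit +infinity.\<close>
definition Blow :: "nat \<Rightarrow> real \<Rightarrow> real \<Rightarrow> real \<Rightarrow> real \<Rightarrow> ereal" where
  "Blow n s1 s2 s3 z =
     (let a = real n * z^2; S = s0 s1 s2 s3; t = tsL s1 s2 s3 in
      if t > 0 then ereal (S / t * exp (- 1/2 * a * (1 / tsL2 s1 s2 s3 - 1/S^2))) else \<infinity>)"

end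

theory Submission
  imports Defs
begin

text \<open>
  The density \<open>fdens\<close> depends on \<open>\<rho>\<close> only through the variance \<open>v = sig2 \<rho>\<close>, and as a
  function of \<open>v\<close> it is a constant multiple of the kernel \<open>exp (-a/(2v)) / \<surd>v\<close> with
  \<open>a = n z\<^sup>2\<close>, which increases on \<open>(0, a]\<close> and decreases on \<open>[a, \<infinity>)\<close>.  Hence \<open>evV\<close> is
  the supremum of this kernel over the variances attained on \<open>R\<close>, divided by its value at
  \<open>s0\<^sup>2\<close>.  These variances lie below \<open>s0\<^sup>2\<close> and fill the whole interval
  \<open>(tsL2, s0\<^sup>2]\<close>: along the diagonal \<open>\<rho> = (t, t, t)\<close> and along
  \<open>\<rho> = (t s\<^sub>3/w, 0, t s\<^sub>1/w)\<close>, \<open>w = \<surd>(s\<^sub>1\<^sup>2 + s\<^sub>3\<^sup>2)\<close>, the variance decreases linearly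
  in \<open>t \<in> [0, 1)\<close> from \<open>s0\<^sup>2\<close> towards \<open>(2s\<^sub>2 - (s\<^sub>1 + s\<^sub>3))\<^sup>2\<close> and \<open>(2s\<^sub>2 - w)\<^sup>2\<close>
  respectively.  Unimodality of the kernel then gives (i)--(iii); the endpoint \<open>tsL2\<close>,
  which need not be attained, is reached by continuity, and for \<open>a = 0\<close> by the blow-up
  of \<open>1/\<surd>v\<close> at \<open>0\<close>.
\<close>

section \<open>The normal kernel\<close>

definition normal_kernel :: "real \<Rightarrow> real \<Rightarrow> real" where
  "normal_kernel a v = exp (- a / (2 * v)) / sqrt v"

lemma normal_kernel_pos: "0 < v \<Longrightarrow> 0 < normal_kernel a v"
  unfolding normal_kernel_def by simp

lemma normal_kernel_nonpos: "v \<le> 0 \<Longrightarrow> normal_kernel a v \<le> 0"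
  unfolding normal_kernel_def by (simp add: divide_nonneg_nonpos)

lemma ln_normal_kernel: "0 < v \<Longrightarrow> ln (normal_kernel a v) = - (a / v + ln v) / 2"
  unfolding normal_kernel_def by (simp add: ln_div ln_sqrt)

lemma normal_kernel_le_iff:
  assumes "0 < u" "0 < v"
  shows "normal_kernel a u \<le> normal_kernel a v \<longleftrightarrow> a / v + ln v \<le> a / u + ln u"
proof -
  have "normal_kernel a u \<le> normal_kernel a v \<longleftrightarrow>
      ln (normal_kernel a u) \<le> ln (normal_kernel a v)"
    using assms by (simp add: normal_kernel_pos)
  also have "\<dots> \<longleftrightarrow> a / v + ln v \<le> a / u + ln u"
    using assms by (auto simp: ln_normal_kernel)
  finally show ?thesis .
qed

lemma normal_kernel_mono_below_mode:
  assumes "0 < u" "u \<le> v" "v \<le> a"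
  shows "normal_kernel a u \<le> normal_kernel a v"
proof -
  have "ln v - ln u \<le> v / u - 1"
    using ln_le_minus_one[of "v / u"] assms by (simp add: ln_div)
  also have "\<dots> = 1 * ((v - u) / u)" using assms by (simp add: field_simps)
  also have "\<dots> \<le> (a / v) * ((v - u) / u)"
    using assms by (intro mult_right_mono) auto
  also have "\<dots> = a / u - a / v" using assms by (simp add: field_simps)
  finally show ?thesis using assms by (simp add: normal_kernel_le_iff)
qed

lemma normal_kernel_antimono_above_mode:
  assumes "0 < u" "a \<le> u" "u \<le> v"
  shows "normal_kernel a v \<le> normal_kernel a u"
proof -
  have "a / u - a / v = (a / u) * ((v - u) / v)" using assms by (simp add: field_simps)
  also have "\<dots> \<le> 1 * ((v - u) / v)"
    using assms by (intro mult_right_mono) auto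
  also have "\<dots> = - (u / v - 1)" using assms by (simp add: field_simps)
  also have "\<dots> \<le> ln v - ln u"
    using ln_le_minus_one[of "u / v"] assms by (simp add: ln_div)
  finally show ?thesis using assms by (simp add: normal_kernel_le_iff)
qed

lemma normal_kernel_le_mode:
  assumes "0 < a"
  shows "normal_kernel a v \<le> normal_kernel a a"
proof (cases "v \<le> 0")
  case True
  then show ?thesis
    using normal_kernel_nonpos[OF True, of a] normal_kernel_pos[OF assms, of a] by linarith
next
  case False
  then show ?thesis
    using normal_kernel_mono_below_mode normal_kernel_antimono_above_mode assms
    by (metis linorder_le_cases not_le)
qed

lemma normal_kernel_ratio:
  assumes "0 < u" "0 < v"
  shows "normal_kernel a u / normal_kernel a v = sqrt v / sqrt u * exp (- 1/2 * a * (1/u - 1/v))"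
proof -
  have "exp (- 1/2 * a * (1/u - 1/v)) = exp (- a / (2 * u)) / exp (- a / (2 * v))"
    unfolding exp_diff[symmetric] by (simp add: field_simps)
  then show ?thesis unfolding normal_kernel_def using assms by (simp add: field_simps)
qed

section \<open>Variances attained on \<open>R\<close>\<close>

lemma fdens_eq_normal_kernel:
  "fdens n s1 s2 s3 z r = sqrt (real n / (2 * pi)) * normal_kernel (real n * z^2) (sig2 s1 s2 s3 r)"
  unfolding fdens_def sig_def normal_kernel_def by simp

lemma s0_squared: "(s0 s1 s2 s3)^2 = s1^2 + 4 * s2^2 + s3^2"
  unfolding s0_def by simp

lemma sig2_zero: "sig2 s1 s2 s3 (0, 0, 0) = (s0 s1 s2 s3)^2"
  unfolding sig2_def s0_squared by simp

lemma zero_mem_Rset: "(0, 0, 0) \<in> Rset s1 s2 s3"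
  unfolding Rset_def by simp

lemma mem_Rset_iff:
  "(r1, r2, r3) \<in> Rset s1 s2 s3 \<longleftrightarrow>
     \<bar>r1\<bar> < 1 \<and> \<bar>r2\<bar> < 1 \<and> \<bar>r3\<bar> < 1 \<and> 0 < 1 - r1^2 - r2^2 - r3^2 + 2 * r1 * r2 * r3 \<and>
     sig2 s1 s2 s3 (r1, r2, r3) \<le> (s0 s1 s2 s3)^2"
  unfolding Rset_def sig_def sig2_zero s0_def by auto

lemma sig2_le_of_mem_Rset: "r \<in> Rset s1 s2 s3 \<Longrightarrow> sig2 s1 s2 s3 r \<le> (s0 s1 s2 s3)^2"
  by (cases r) (simp add: mem_Rset_iff)

lemma bdd_below_sig2_Rset: "bdd_below (sig2 s1 s2 s3 ` Rset s1 s2 s3)"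
proof (rule bdd_belowI2)
  fix r assume "r \<in> Rset s1 s2 s3"
  then obtain r1 r2 r3 where r: "r = (r1, r2, r3)" "\<bar>r1\<bar> < 1" "\<bar>r2\<bar> < 1" "\<bar>r3\<bar> < 1"
    by (cases r) (auto simp: mem_Rset_iff)
  have "\<bar>c * r'\<bar> \<le> \<bar>c\<bar>" if "\<bar>r'\<bar> < 1" for c r' :: real
    using that by (simp add: abs_mult mult_left_le)
  from this[OF r(4), of "4 * s1 * s2"] this[OF r(3), of "2 * s1 * s3"] this[OF r(2), of "4 * s2 * s3"]
  show "s1^2 + 4 * s2^2 + s3^2 - \<bar>4 * s1 * s2\<bar> - \<bar>2 * s1 * s3\<bar> - \<bar>4 * s2 * s3\<bar>
      \<le> sig2 s1 s2 s3 r"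
    unfolding r sig2_def by (simp add: abs_le_iff algebra_simps)
qed

lemma diagonal_variances_subset_sig2_Rset:
  "{(2 * s2 - (s1 + s3))^2 <.. (s0 s1 s2 s3)^2} \<subseteq> sig2 s1 s2 s3 ` Rset s1 s2 s3"
proof
  fix x assume x: "x \<in> {(2 * s2 - (s1 + s3))^2 <.. (s0 s1 s2 s3)^2}"
  define S where "S = (s0 s1 s2 s3)^2"
  define t where "t = (S - x) / (S - (2 * s2 - (s1 + s3))^2)"
  have t: "0 \<le> t" "t < 1" using x unfolding t_def S_def by (auto simp: field_simps)
  have "sig2 s1 s2 s3 (t, t, t) = S - t * (S - (2 * s2 - (s1 + s3))^2)"
    unfolding sig2_def S_def s0_squared by (simp add: power2_eq_square algebra_simps)
  also have "\<dots> = x" using x unfolding t_def S_def by (simp add: field_simps)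
  finally have sig2_t: "sig2 s1 s2 s3 (t, t, t) = x" .
  have "1 - t^2 - t^2 - t^2 + 2 * t * t * t = (1 - t)^2 * (1 + 2 * t)"
    by (simp add: power2_eq_square algebra_simps)
  also have "\<dots> > 0" using t by (intro mult_pos_pos) auto
  finally have "(t, t, t) \<in> Rset s1 s2 s3"
    using t x sig2_t by (simp add: mem_Rset_iff)
  then show "x \<in> sig2 s1 s2 s3 ` Rset s1 s2 s3" using sig2_t by force
qed

text \<open>Taking \<open>(\<rho>\<^sub>1, \<rho>\<^sub>3)\<close> parallel to \<open>(s\<^sub>3, s\<^sub>1)\<close> makes the reduction
  \<open>4 s\<^sub>2 (s\<^sub>3 \<rho>\<^sub>1 + s\<^sub>1 \<rho>\<^sub>3)\<close> of the variance maximal for given \<open>\<rho>\<^sub>1\<^sup>2 + \<rho>\<^sub>3\<^sup>2\<close>.\<close>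

lemma offdiagonal_variances_subset_sig2_Rset:
  assumes "0 < s1" "0 < s2" "0 < s3"
  shows "{(2 * s2 - sqrt (s1^2 + s3^2))^2 <.. (s0 s1 s2 s3)^2} \<subseteq> sig2 s1 s2 s3 ` Rset s1 s2 s3"
proof
  fix x assume x: "x \<in> {(2 * s2 - sqrt (s1^2 + s3^2))^2 <.. (s0 s1 s2 s3)^2}"
  define w where "w = sqrt (s1^2 + s3^2)"
  have w: "0 < w" "w^2 = s1^2 + s3^2" unfolding w_def using assms by (auto intro: add_pos_pos)
  have "s1 < w" "s3 < w"
    unfolding w_def using assms by (auto intro!: real_less_rsqrt)
  have S: "(s0 s1 s2 s3)^2 = (2 * s2 - w)^2 + 4 * s2 * w"
    unfolding s0_squared power2_diff w(2) by simp
  define t where "t = ((s0 s1 s2 s3)^2 - x) / (4 * s2 * w)"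
  have t: "0 \<le> t" "t < 1" using x assms w unfolding t_def w_def[symmetric] S by (auto simp: field_simps)
  have "sig2 s1 s2 s3 (t * s3 / w, 0, t * s1 / w) = s1^2 + 4 * s2^2 + s3^2 - 4 * s2 * t * w^2 / w"
    unfolding sig2_def w(2) by (simp add: power2_eq_square add_divide_distrib algebra_simps)
  also have "\<dots> = x" using w assms unfolding t_def s0_squared by (simp add: power2_eq_square)
  finally have sig2_t: "sig2 s1 s2 s3 (t * s3 / w, 0, t * s1 / w) = x" .
  have "(t * s3 / w)^2 + (t * s1 / w)^2 = t^2 * ((s1^2 + s3^2) / w^2)"
    by (simp add: power_divide add_divide_distrib algebra_simps)
  also have "\<dots> = t^2" using w by (simp flip: w(2))
  finally have "1 - (t * s3 / w)^2 - 0^2 - (t * s1 / w)^2 + 2 * (t * s3 / w) * 0 * (t * s1 / w) = 1 - t^2"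
    using w by simp
  also have "\<dots> > 0" using t by (simp add: abs_square_less_1)
  moreover have "t * s1 < w" "t * s3 < w"
    using t assms \<open>s1 < w\<close> \<open>s3 < w\<close> by (auto intro: le_less_trans[OF mult_left_le_one_le])
  ultimately have "(t * s3 / w, 0, t * s1 / w) \<in> Rset s1 s2 s3"
    using t x w assms sig2_t by (simp add: mem_Rset_iff)
  then show "x \<in> sig2 s1 s2 s3 ` Rset s1 s2 s3" using sig2_t by force
qed

lemma tsL2_variances_subset_sig2_Rset:
  assumes "0 < s1" "0 < s2" "0 < s3"
  shows "{tsL2 s1 s2 s3 <.. (s0 s1 s2 s3)^2} \<subseteq> sig2 s1 s2 s3 ` Rset s1 s2 s3"
proof -
  have "{tsL2 s1 s2 s3 <.. (s0 s1 s2 s3)^2} \<subseteq>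
      {(2 * s2 - (s1 + s3))^2 <.. (s0 s1 s2 s3)^2} \<union>
      {(2 * s2 - sqrt (s1^2 + s3^2))^2 <.. (s0 s1 s2 s3)^2}"
    unfolding tsL2_def by (auto simp: min_less_iff_disj)
  then show ?thesis
    by (rule order_trans)
      (intro Un_least diagonal_variances_subset_sig2_Rset offdiagonal_variances_subset_sig2_Rset[OF assms])
qed

lemma tsL2_nonneg: "0 \<le> tsL2 s1 s2 s3"
  unfolding tsL2_def by simp

lemma tsL2_le_s0_squared:
  assumes "0 \<le> s2"
  shows "tsL2 s1 s2 s3 \<le> (s0 s1 s2 s3)^2"
proof -
  have "tsL2 s1 s2 s3 \<le> (2 * s2 - sqrt (s1^2 + s3^2))^2"
    unfolding tsL2_def by simp
  also have "\<dots> = (s0 s1 s2 s3)^2 - 4 * s2 * sqrt (s1^2 + s3^2)"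
    unfolding s0_squared power2_diff by simp
  also have "\<dots> \<le> (s0 s1 s2 s3)^2" using assms by simp
  finally show ?thesis .
qed

lemma sL2_le_tsL2:
  assumes "0 < s1" "0 < s2" "0 < s3"
  shows "sL2 s1 s2 s3 \<le> tsL2 s1 s2 s3"
proof -
  have lower: "sL2 s1 s2 s3 \<le> v" if "v \<in> sig2 s1 s2 s3 ` Rset s1 s2 s3" for v
    unfolding sL2_def using that bdd_below_sig2_Rset by (rule cInf_lower)
  show ?thesis
  proof (cases "tsL2 s1 s2 s3 < (s0 s1 s2 s3)^2")
    case True
    show ?thesis
    proof (rule dense_ge_bounded[OF True])
      fix v assume "tsL2 s1 s2 s3 < v" "v < (s0 s1 s2 s3)^2"
      then show "sL2 s1 s2 s3 \<le> v"
        by (intro lower subsetD[OF tsL2_variances_subset_sig2_Rset[OF assms]]) auto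
    qed
  next
    case False
    then have "tsL2 s1 s2 s3 = sig2 s1 s2 s3 (0, 0, 0)"
      using tsL2_le_s0_squared[of s2 s1 s3] assms(2) by (simp add: sig2_zero)
    then show ?thesis using lower zero_mem_Rset by simp
  qed
qed

section \<open>Suprema of the likelihood ratio over a range of variances\<close>

definition sup_likelihood_ratio :: "real set \<Rightarrow> real \<Rightarrow> real \<Rightarrow> ereal" where
  "sup_likelihood_ratio V S a = (SUP v\<in>V. ereal (normal_kernel a v / normal_kernel a S))"

text \<open>In the application \<open>V\<close> is the set of variances attained on \<open>R\<close>,
  \<open>S = s0\<^sup>2\<close> and \<open>T = tsL2\<close>.\<close>

locale variance_range =
  fixes V :: "real set" and S T :: real
  assumes S_pos: "0 < S" and S_mem: "S \<in> V" and le_S: "V \<subseteq> {..S}"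
    and T_le_S: "T \<le> S" and interval_subset: "{T<..S} \<subseteq> V"
begin

lemma sup_likelihood_ratio_ge:
  "v \<in> V \<Longrightarrow> ereal (normal_kernel a v / normal_kernel a S) \<le> sup_likelihood_ratio V S a"
  unfolding sup_likelihood_ratio_def by (rule SUP_upper)

lemma sup_likelihood_ratio_le:
  assumes "\<And>v. v \<in> V \<Longrightarrow> normal_kernel a v \<le> c"
  shows "sup_likelihood_ratio V S a \<le> ereal (c / normal_kernel a S)"
  unfolding sup_likelihood_ratio_def
proof (rule SUP_least)
  fix v assume "v \<in> V"
  then have "normal_kernel a v / normal_kernel a S \<le> c / normal_kernel a S"
    using assms normal_kernel_pos[OF S_pos, of a] by (simp add: divide_right_mono)
  then show "ereal (normal_kernel a v / normal_kernel a S) \<le> ereal (c / normal_kernel a S)"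
    by simp
qed

lemma sup_likelihood_ratio_le_mode:
  "0 < a \<Longrightarrow> sup_likelihood_ratio V S a \<le> ereal (normal_kernel a a / normal_kernel a S)"
  by (intro sup_likelihood_ratio_le normal_kernel_le_mode)

lemma sup_likelihood_ratio_eq_one:
  assumes "S \<le> a"
  shows "sup_likelihood_ratio V S a = 1"
proof (rule antisym)
  have "normal_kernel a v \<le> normal_kernel a S" if "v \<in> V" for v
  proof (cases "v \<le> 0")
    case True
    then show ?thesis using normal_kernel_nonpos[OF True, of a] normal_kernel_pos[OF S_pos, of a] by linarith
  next
    case False
    then show ?thesis using that le_S assms by (intro normal_kernel_mono_below_mode) auto
  qed
  then have "sup_likelihood_ratio V S a \<le> ereal (normal_kernel a S / normal_kernel a S)"
    by (rule sup_likelihood_ratio_le)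
  then show "sup_likelihood_ratio V S a \<le> 1"
    using normal_kernel_pos[OF S_pos, of a] by (simp add: one_ereal_def)
  show "1 \<le> sup_likelihood_ratio V S a"
    using sup_likelihood_ratio_ge[OF S_mem, of a] normal_kernel_pos[OF S_pos, of a]
    by (simp add: one_ereal_def)
qed

lemma sup_likelihood_ratio_ge_limit:
  assumes "T \<le> t" "t < S"
    and "((\<lambda>v. ereal (normal_kernel a v / normal_kernel a S)) \<longlongrightarrow> L) (at_right t)"
  shows "L \<le> sup_likelihood_ratio V S a"
proof (rule tendsto_upperbound[OF assms(3)])
  have "eventually (\<lambda>v. v \<in> {t<..<S}) (at_right t)"
    using assms(2) by (rule eventually_at_right_real)
  then show "eventually (\<lambda>v. ereal (normal_kernel a v / normal_kernel a S)
      \<le> sup_likelihood_ratio V S a) (at_right t)"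
    by eventually_elim
      (use assms(1) in \<open>auto intro!: sup_likelihood_ratio_ge subsetD[OF interval_subset]\<close>)
qed simp

lemma sup_likelihood_ratio_ge_lower_end:
  assumes "0 < T"
  shows "ereal (normal_kernel a T / normal_kernel a S) \<le> sup_likelihood_ratio V S a"
proof (cases "T = S")
  case True
  then show ?thesis using sup_likelihood_ratio_ge[OF S_mem] by simp
next
  case False
  have "isCont (normal_kernel a) T"
    unfolding normal_kernel_def using assms by (intro continuous_intros) auto
  then have "((\<lambda>v. ereal (normal_kernel a v / normal_kernel a S)) \<longlongrightarrow>
      ereal (normal_kernel a T / normal_kernel a S)) (at_right T)"
    using normal_kernel_pos[OF S_pos, of a]
    by (intro tendsto_intros) (auto simp: isCont_def filterlim_at_split)
  then show ?thesis using False T_le_S by (intro sup_likelihood_ratio_ge_limit) auto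
qed

lemma sup_likelihood_ratio_infinite:
  assumes "T \<le> 0"
  shows "sup_likelihood_ratio V S 0 = \<infinity>"
proof -
  have "((\<lambda>v. ereal (normal_kernel 0 v / normal_kernel 0 S)) \<longlongrightarrow> \<infinity>) (at_right 0)"
    unfolding tendsto_PInfty_eq_at_top normal_kernel_def using S_pos by simp real_asymp
  then have "\<infinity> \<le> sup_likelihood_ratio V S 0"
    using assms S_pos by (intro sup_likelihood_ratio_ge_limit) auto
  then show ?thesis by simp
qed

end

section \<open>The evidential value\<close>

lemma variance_range_sig2_Rset:
  assumes "0 < s1" "0 < s2" "0 < s3"
  shows "variance_range (sig2 s1 s2 s3 ` Rset s1 s2 s3) ((s0 s1 s2 s3)^2) (tsL2 s1 s2 s3)"
proof
  show "0 < (s0 s1 s2 s3)^2" using assms by (simp add: s0_squared add_pos_pos)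
  show "(s0 s1 s2 s3)^2 \<in> sig2 s1 s2 s3 ` Rset s1 s2 s3"
    using zero_mem_Rset by (force simp flip: sig2_zero)
  show "sig2 s1 s2 s3 ` Rset s1 s2 s3 \<subseteq> {..(s0 s1 s2 s3)^2}"
    using sig2_le_of_mem_Rset by blast
qed (use assms tsL2_le_s0_squared tsL2_variances_subset_sig2_Rset in auto)

lemma evV_eq_sup_likelihood_ratio:
  assumes "0 < n" "0 < s0 s1 s2 s3"
  shows "evV n s1 s2 s3 z =
    sup_likelihood_ratio (sig2 s1 s2 s3 ` Rset s1 s2 s3) ((s0 s1 s2 s3)^2) (real n * z^2)"
proof -
  define c where "c = sqrt (real n / (2 * pi))"
  define k where "k = normal_kernel (real n * z^2)"
  define S where "S = (s0 s1 s2 s3)^2"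
  have pos: "0 < c" "0 < k S"
    unfolding c_def k_def S_def using assms by (simp_all add: normal_kernel_pos)
  then have ck: "0 < c * k S" by simp
  have fdens: "fdens n s1 s2 s3 z = (\<lambda>r. c * k (sig2 s1 s2 s3 r))"
    unfolding c_def k_def by (simp add: fun_eq_iff fdens_eq_normal_kernel)
  have "evV n s1 s2 s3 z = (SUP r\<in>Rset s1 s2 s3. ereal (c * k (sig2 s1 s2 s3 r))) / ereal (c * k S)"
    unfolding evV_def fdens sig2_zero S_def ..
  also have "\<dots> = (SUP r\<in>Rset s1 s2 s3. ereal (c * k (sig2 s1 s2 s3 r))) * ereal (inverse (c * k S))"
    using ck[THEN less_imp_neq, symmetric] by (simp only: divide_ereal_def inverse_ereal.simps(1) if_False)
  also have "\<dots> = (SUP r\<in>Rset s1 s2 s3. ereal (c * k (sig2 s1 s2 s3 r)) * ereal (inverse (c * k S)))"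
    using zero_mem_Rset ck
    by (intro Sup_ereal_mult_right' less_imp_le positive_imp_inverse_positive) auto
  also have "\<dots> = (SUP r\<in>Rset s1 s2 s3. ereal (k (sig2 s1 s2 s3 r) / k S))"
    using pos by (simp add: field_simps)
  finally show ?thesis
    unfolding sup_likelihood_ratio_def k_def S_def by (simp add: image_comp)
qed

lemma s0_pos: "0 < s2 \<Longrightarrow> 0 < s0 s1 s2 s3"
  unfolding s0_def by (intro real_sqrt_gt_zero add_pos_nonneg add_nonneg_pos) auto

lemma Bup_eq_likelihood_ratio:
  assumes "0 < real n * z^2" "0 < s0 s1 s2 s3"
  shows "Bup n s1 s2 s3 z = ereal (normal_kernel (real n * z^2) (real n * z^2)
      / normal_kernel (real n * z^2) ((s0 s1 s2 s3)^2))"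
  unfolding Bup_def Let_def using assms by (simp add: normal_kernel_ratio)

lemma Blow_eq_likelihood_ratio:
  assumes "0 < tsL2 s1 s2 s3" "0 < s0 s1 s2 s3"
  shows "Blow n s1 s2 s3 z = ereal (normal_kernel (real n * z^2) (tsL2 s1 s2 s3)
      / normal_kernel (real n * z^2) ((s0 s1 s2 s3)^2))"
  unfolding Blow_def Let_def tsL_def using assms by (simp add: normal_kernel_ratio)

lemma Bup_infinite:
  assumes "real n * z^2 = 0"
  shows "Bup n s1 s2 s3 z = \<infinity>"
  unfolding Bup_def Let_def assms by simp

lemma Blow_infinite: "tsL2 s1 s2 s3 = 0 \<Longrightarrow> Blow n s1 s2 s3 z = \<infinity>"
  unfolding Blow_def Let_def tsL_def by simp

context
  fixes n :: nat and s1 s2 s3 z :: real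
  assumes n_pos: "0 < n" and s_pos: "0 < s1" "0 < s2" "0 < s3"
begin

interpretation variance_range "sig2 s1 s2 s3 ` Rset s1 s2 s3" "(s0 s1 s2 s3)^2" "tsL2 s1 s2 s3"
  by (rule variance_range_sig2_Rset[OF s_pos])

lemmas evV_eq = evV_eq_sup_likelihood_ratio[OF n_pos s0_pos[OF s_pos(2)]]

lemma evV_infinite:
  assumes "tsL2 s1 s2 s3 = 0" "real n * z^2 = 0"
  shows "evV n s1 s2 s3 z = \<infinity>"
  unfolding evV_eq assms(2) using assms(1) by (simp add: sup_likelihood_ratio_infinite)

lemma evV_eq_Bup:
  assumes "tsL2 s1 s2 s3 \<le> real n * z^2" "real n * z^2 \<le> (s0 s1 s2 s3)^2"
  shows "evV n s1 s2 s3 z = Bup n s1 s2 s3 z \<and> 1 \<le> Bup n s1 s2 s3 z"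
proof (cases "real n * z^2 = 0")
  case True
  then have "tsL2 s1 s2 s3 = 0" using assms(1) tsL2_nonneg[of s1 s2 s3] by linarith
  then show ?thesis using evV_infinite True by (simp add: Bup_infinite)
next
  case False
  let ?a = "real n * z^2" and ?S = "(s0 s1 s2 s3)^2"
  have a_pos: "0 < ?a" using False by simp
  have Bup: "Bup n s1 s2 s3 z = ereal (normal_kernel ?a ?a / normal_kernel ?a ?S)"
    using a_pos s0_pos[OF s_pos(2)] by (rule Bup_eq_likelihood_ratio)
  have "Bup n s1 s2 s3 z \<le> evV n s1 s2 s3 z"
  proof (cases "tsL2 s1 s2 s3 < ?a")
    case True
    then show ?thesis unfolding Bup evV_eq
      using assms(2) by (auto intro!: sup_likelihood_ratio_ge subsetD[OF interval_subset])
  next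
    case False
    then show ?thesis unfolding Bup evV_eq
      using assms(1) a_pos sup_likelihood_ratio_ge_lower_end[of ?a] by simp
  qed
  moreover have "evV n s1 s2 s3 z \<le> Bup n s1 s2 s3 z"
    unfolding Bup evV_eq using a_pos by (rule sup_likelihood_ratio_le_mode)
  moreover have "normal_kernel ?a ?S \<le> normal_kernel ?a ?a"
    using a_pos by (rule normal_kernel_le_mode)
  then have "1 \<le> Bup n s1 s2 s3 z"
    unfolding Bup using normal_kernel_pos[OF S_pos, of ?a] by (simp add: one_ereal_def)
  ultimately show ?thesis by simp
qed

lemma evV_between_Blow_Bup:
  assumes "real n * z^2 \<le> tsL2 s1 s2 s3"
  shows "Blow n s1 s2 s3 z \<le> evV n s1 s2 s3 z \<and> 1 \<le> Blow n s1 s2 s3 z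
    \<and> evV n s1 s2 s3 z \<le> Bup n s1 s2 s3 z"
proof (cases "tsL2 s1 s2 s3 = 0")
  case True
  moreover have "0 \<le> real n * z^2" by simp
  ultimately have "real n * z^2 = 0" using assms by linarith
  then show ?thesis using evV_infinite True by (simp add: Bup_infinite Blow_infinite)
next
  case False
  let ?a = "real n * z^2" and ?S = "(s0 s1 s2 s3)^2" and ?T = "tsL2 s1 s2 s3"
  have T_pos: "0 < ?T" using False tsL2_nonneg[of s1 s2 s3] by linarith
  have Blow: "Blow n s1 s2 s3 z = ereal (normal_kernel ?a ?T / normal_kernel ?a ?S)"
    using T_pos s0_pos[OF s_pos(2)] by (rule Blow_eq_likelihood_ratio)
  have "Blow n s1 s2 s3 z \<le> evV n s1 s2 s3 z"
    unfolding Blow evV_eq using T_pos by (rule sup_likelihood_ratio_ge_lower_end)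
  moreover have "normal_kernel ?a ?S \<le> normal_kernel ?a ?T"
    using T_pos assms T_le_S by (rule normal_kernel_antimono_above_mode)
  then have "1 \<le> Blow n s1 s2 s3 z"
    unfolding Blow using normal_kernel_pos[OF S_pos, of ?a] by (simp add: one_ereal_def)
  moreover have "evV n s1 s2 s3 z \<le> Bup n s1 s2 s3 z"
  proof (cases "?a = 0")
    case False
    then have "0 < ?a" by simp
    then show ?thesis
      using s0_pos[OF s_pos(2)]
      by (simp add: evV_eq Bup_eq_likelihood_ratio sup_likelihood_ratio_le_mode)
  qed (simp add: Bup_infinite)
  ultimately show ?thesis by simp
qed

lemma evV_eq_one:
  "(s0 s1 s2 s3)^2 \<le> real n * z^2 \<Longrightarrow> evV n s1 s2 s3 z = 1"
  by (simp add: evV_eq sup_likelihood_ratio_eq_one)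

end

theorem theorem1:
  fixes n :: nat and s1 s2 s3 z :: real
  assumes "n > 0" and "s1 > 0" and "s2 > 0" and "s3 > 0"
  shows "sL2 s1 s2 s3 \<le> tsL2 s1 s2 s3 \<and> tsL2 s1 s2 s3 \<le> (s0 s1 s2 s3)^2
    \<and> (tsL2 s1 s2 s3 \<le> real n * z^2 \<and> real n * z^2 \<le> (s0 s1 s2 s3)^2 \<longrightarrow>
         evV n s1 s2 s3 z = Bup n s1 s2 s3 z \<and> Bup n s1 s2 s3 z \<ge> 1)
    \<and> (real n * z^2 \<le> tsL2 s1 s2 s3 \<longrightarrow>
         evV n s1 s2 s3 z \<ge> Blow n s1 s2 s3 z \<and> Blow n s1 s2 s3 z \<ge> 1
         \<and> evV n s1 s2 s3 z \<le> Bup n s1 s2 s3 z)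
    \<and> ((s0 s1 s2 s3)^2 \<le> real n * z^2 \<longrightarrow> evV n s1 s2 s3 z = 1)"
  using sL2_le_tsL2[OF assms(2-4)] tsL2_le_s0_squared[of s2 s1 s3] evV_eq_Bup[OF assms]
    evV_between_Blow_Bup[OF assms] evV_eq_one[OF assms] assms(3)
  by auto

end
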